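(* Let $p\ne5$ be an odd prime and let $G_p(X,Y)=\sum_{0\le i,j\le p+1}C_{i,j}X^iY^j\in\mathbb{Q}[X,Y]$ be a nonzero polynomial with $G_p(g(\tau),g(p\tau))=0$ for all $\tau\in\mathbb{H}$ (the modular equation for $g$ of level $p$). Then (1) $C_{p+1,0}\ne0$ and $C_{0,p+1}\ne0$; (2) $C_{p+1,j}=C_{j,p+1}=0$ for all $j\in\{1,2,\dots,p+1\}$; (3) $C_{0,j}=C_{j,0}=0$ for all $j\in\{0,1,\dots,p\}$.
   Context: $q=e^{2\pi i\tau}$, $\eta(\tau)=q^{1/24}\prod_{n\ge1}(1-q^n)$, and $g(\tau)=\dfrac{\eta^2(2\tau)\eta^4(5\tau)}{\eta^4(\tau)\eta^2(10\tau)}$. *)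

theory Defs
  imports "HOL-Analysis.Analysis"
begin

definition qnome :: "complex \<Rightarrow> complex" where
  "qnome \<tau> = exp (2 * of_real pi * \<i> * \<tau>)"

definition dedekind_eta :: "complex \<Rightarrow> complex" where
  "dedekind_eta \<tau> = exp (2 * of_real pi * \<i> * \<tau> / 24) *
     (\<Prod>n. 1 - qnome \<tau> ^ Suc n)"

definition gfun :: "complex \<Rightarrow> complex" where
  "gfun \<tau> = (dedekind_eta (2 * \<tau>) ^ 2 * dedekind_eta (5 * \<tau>) ^ 4) /
             (dedekind_eta \<tau> ^ 4 * dedekind_eta (10 * \<tau>) ^ 2)"

definition eval_bipoly :: "nat \<Rightarrow> (nat \<Rightarrow> nat \<Rightarrow> rat) \<Rightarrow> complex \<Rightarrow> complex \<Rightarrow> complex" where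
  "eval_bipoly N C x y = (\<Sum>i\<le>N. \<Sum>j\<le>N. of_rat (C i j) * x ^ i * y ^ j)"

end

theory Submission
  imports Defs "HOL-Real_Asymp.Real_Asymp" "HOL-Computational_Algebra.Polynomial"
begin

text \<open>Write \<open>\<eta>(\<tau>) = q\<^sup>1\<^sup>/\<^sup>2\<^sup>4 \<phi>(q)\<close> with Euler's function \<open>\<phi>(q) = \<Prod>(1 - q\<^sup>n)\<close>. When \<open>\<tau>\<close>
  approaches the cusp \<open>j/n\<close> vertically, \<open>q\<close> approaches a primitive \<open>n\<close>-th root of unity, and
  grouping the factors of \<open>\<phi>\<close> into blocks of \<open>n\<close> shows \<open>Im \<tau> \<cdot> log |\<phi>(q)| \<longrightarrow> -\<pi>/(12 n\<^sup>2)\<close>.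
  Hence along the vertical line through a cusp \<open>x\<close>, \<open>y log |g(x + iy)|\<close> and
  \<open>y log |g(p(x + iy))|\<close> tend to explicit constants \<open>a\<close> and \<open>b\<close>. In a relation
  \<open>G(g(\<tau>), g(p\<tau>)) = 0\<close> the monomials \<open>X\<^sup>i Y\<^sup>j\<close> of largest growth \<open>a i + b j\<close> must cancel,
  so this maximum is attained at least twice on the support of \<open>G\<close>. The cusps \<open>0\<close>, \<open>1/p\<close>,
  \<open>1/5\<close>, \<open>1/(5p)\<close> give this for the maxima of \<open>p i + j\<close> and \<open>i + p j\<close> and for their minima,
  and inside the box \<open>[0, p + 1]\<^sup>2\<close> these four conditions leave only the support described in
  the theorem.\<close>

section \<open>Euler's function near \<open>q = 1\<close>\<close>

definition ln_norm_euler_phi :: "complex \<Rightarrow> real" where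
  "ln_norm_euler_phi q = (\<Sum>n. ln (norm (1 - q ^ Suc n)))"

text \<open>At \<open>x = 0\<close> this is \<open>0 / 0 = 0\<close>, not the limit \<open>1\<close>.\<close>
definition bernoulli_gf :: "real \<Rightarrow> real" where
  "bernoulli_gf x = x / (exp x - 1)"

text \<open>The term \<open>k = 0\<close> is \<open>1 / 0 = 0\<close>; the value \<open>\<pi>\<^sup>2/6\<close> is never needed.\<close>
definition basel_sum :: real where
  "basel_sum = (\<Sum>k. 1 / (real k)^2)"

lemma tendsto_bernoulli_gf: "(bernoulli_gf \<longlongrightarrow> 1) (at_right 0)"
  unfolding bernoulli_gf_def by real_asymp

lemma bernoulli_gf_nonneg: "x \<ge> 0 \<Longrightarrow> bernoulli_gf x \<ge> 0"
  by (simp add: bernoulli_gf_def)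

lemma bernoulli_gf_le_1:
  assumes "x \<ge> 0" shows "bernoulli_gf x \<le> 1"
proof (cases "x = 0")
  case False
  have "x \<le> exp x - 1" using exp_ge_add_one_self[of x] by linarith
  moreover have "exp x - 1 > 0" using False assms by simp
  ultimately show ?thesis by (simp add: bernoulli_gf_def)
qed (simp add: bernoulli_gf_def)

lemma basel_sum_pos: "basel_sum > 0"
proof -
  have "summable (\<lambda>k. 1 / (real k)^2)"
    using inverse_power_summable[of 2, where 'a=real] by (simp add: inverse_eq_divide)
  then show ?thesis
    unfolding basel_sum_def by (rule suminf_pos2[of _ 1]) auto
qed

lemma sums_swap_nonneg:
  fixes f :: "nat \<Rightarrow> nat \<Rightarrow> real"
  assumes nonneg: "\<And>n k. f n k \<ge> 0"
    and rows: "\<And>n. (\<lambda>k. f n k) sums g n" and cols: "\<And>k. (\<lambda>n. f n k) sums h k"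
    and "summable g"
  shows "h sums suminf g"
proof -
  have rows': "((\<lambda>k. f n k) has_sum g n) UNIV" for n
    using rows nonneg by (intro sums_nonneg_imp_has_sum) auto
  have cols': "((\<lambda>n. f n k) has_sum h k) UNIV" for k
    using cols nonneg by (intro sums_nonneg_imp_has_sum) auto
  have "g n \<ge> 0" for n
    using rows nonneg by (metis sums_le sums_zero)
  then have "g summable_on UNIV"
    using \<open>summable g\<close> by (intro summable_nonneg_imp_summable_on) auto
  then have "(\<lambda>(n, k). f n k) summable_on UNIV \<times> UNIV"
    using summable_on_SigmaI[where f="\<lambda>(n, k). f n k" and A=UNIV and B="\<lambda>_. UNIV"] rows' nonneg
    by auto
  then obtain T where T: "((\<lambda>(n, k). f n k) has_sum T) (UNIV \<times> UNIV)"
    by (auto simp: summable_on_def)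
  have "(g has_sum T) UNIV"
    using has_sum_SigmaD[where f="\<lambda>(n, k). f n k" and B="\<lambda>_. UNIV"] T rows' by auto
  then have "suminf g = T"
    by (metis has_sum_imp_sums sums_unique)
  have "((\<lambda>(k, n). f n k) has_sum T) (UNIV \<times> UNIV)"
    using T has_sum_swap[of "\<lambda>(n, k). f n k" UNIV UNIV T] by simp
  then have "(h has_sum T) UNIV"
    using has_sum_SigmaD[where f="\<lambda>(k, n). f n k" and B="\<lambda>_. UNIV"] cols' by auto
  then show ?thesis
    using \<open>suminf g = T\<close> by (simp add: has_sum_imp_sums)
qed

lemma abs_ln_norm_one_minus_le:
  fixes w :: complex
  assumes "norm w \<le> 1/2"
  shows "\<bar>ln (norm (1 - w))\<bar> \<le> 2 * norm w"
proof -
  have lo: "1 - norm w \<le> norm (1 - w)" and hi: "norm (1 - w) \<le> 1 + norm w"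
    using norm_triangle_ineq2[of 1 w] norm_triangle_ineq4[of 1 w] by simp_all
  have pos: "0 < 1 - norm w" using assms by simp
  have "ln (norm (1 - w)) \<le> norm (1 - w) - 1"
    using lo pos by (intro ln_le_minus_one) linarith
  then have upper: "ln (norm (1 - w)) \<le> norm w" using hi by linarith
  have "- ln (1 - norm w) = ln (1 / (1 - norm w))" using pos by (simp add: ln_div)
  also have "\<dots> \<le> 1 / (1 - norm w) - 1" using pos by (intro ln_le_minus_one) simp
  also have "\<dots> = norm w / (1 - norm w)" using pos by (simp add: field_simps)
  also have "\<dots> \<le> norm w / (1/2)" using pos assms by (intro divide_left_mono) auto
  finally have "- (2 * norm w) \<le> ln (1 - norm w)" by simp
  also have "\<dots> \<le> ln (norm (1 - w))" using lo pos by (subst ln_le_cancel_iff) auto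
  finally show ?thesis using upper by (simp add: abs_le_iff)
qed

lemma summable_ln_norm_one_minus:
  fixes w :: "nat \<Rightarrow> complex"
  assumes "0 < r" "r < 1" and "\<And>n. norm (w n) \<le> r ^ Suc n"
  shows "summable (\<lambda>n. ln (norm (1 - w n)))"
proof (rule summable_comparison_test_ev)
  have "(\<lambda>n. r ^ Suc n) \<longlonglongrightarrow> 0"
    using assms by (intro LIMSEQ_Suc LIMSEQ_power_zero) simp
  then have "eventually (\<lambda>n. r ^ Suc n < 1/2) sequentially"
    by (rule order_tendstoD) simp
  then show "eventually (\<lambda>n. norm (ln (norm (1 - w n))) \<le> 2 * r ^ Suc n) sequentially"
  proof eventually_elim
    case (elim n)
    then have "norm (w n) \<le> 1/2" using assms(3)[of n] by linarith
    from abs_ln_norm_one_minus_le[OF this] show ?case using assms(3)[of n] by simp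
  qed
  show "summable (\<lambda>n. 2 * r ^ Suc n)"
    using assms by (intro summable_mult) (simp add: summable_geometric)
qed

lemma norm_one_minus_of_real_power:
  assumes "0 \<le> r" "r < 1"
  shows "norm (1 - of_real r ^ Suc n :: complex) = 1 - r ^ Suc n"
proof -
  have "r ^ Suc n < 1"
    using assms by (simp add: power_less_one_iff del: power_Suc)
  then show ?thesis
    by (metis abs_of_pos diff_gt_0_iff_gt norm_of_real of_real_1 of_real_diff of_real_power)
qed

lemma ln_norm_euler_phi_of_real:
  "0 \<le> r \<Longrightarrow> r < 1 \<Longrightarrow> ln_norm_euler_phi (of_real r) = (\<Sum>n. ln (1 - r ^ Suc n))"
  by (simp add: ln_norm_euler_phi_def norm_one_minus_of_real_power del: power_Suc)

text \<open>Expanding each \<open>ln (1 - q\<^sup>n)\<close> into its power series and summing over \<open>n\<close> first.\<close>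
lemma scaled_ln_euler_phi_eq:
  assumes "s > 0"
  shows "s * ln_norm_euler_phi (of_real (exp (-s))) = - (\<Sum>k. bernoulli_gf (real k * s) / (real k)^2)"
proof -
  define r where "r = exp (-s)"
  have r: "0 < r" "r < 1" using assms by (auto simp: r_def)
  define f where "f n k = (r ^ Suc n) ^ k / real k" for n k
  have rows: "(\<lambda>k. f n k) sums - ln (1 - r ^ Suc n)" for n
  proof -
    have "\<bar>- (r ^ Suc n)\<bar> < 1"
      using r by (simp add: power_less_one_iff del: power_Suc)
    from sums_minus[OF ln_series'[OF this]] show ?thesis by (simp add: f_def)
  qed
  have cols: "(\<lambda>n. f n k) sums (r ^ k / (1 - r ^ k) / real k)" for k
  proof (cases "k = 0")
    case False
    have "r ^ k < 1" using r False by (simp add: power_less_one_iff)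
    then have "(\<lambda>n. r ^ k * (r ^ k) ^ n / real k) sums (r ^ k * (1 / (1 - r ^ k)) / real k)"
      using r by (intro sums_divide sums_mult geometric_sums) simp
    moreover have "r ^ k * (r ^ k) ^ n = (r ^ Suc n) ^ k" for n
      by (simp add: power_mult_distrib flip: power_mult) (simp add: mult.commute)
    ultimately show ?thesis by (simp add: f_def)
  qed (simp add: f_def)
  have "summable (\<lambda>n. ln (norm (1 - of_real r ^ Suc n :: complex)))"
    by (rule summable_ln_norm_one_minus[OF r]) (use r in \<open>simp add: norm_power abs_of_pos del: power_Suc\<close>)
  then have summable: "summable (\<lambda>n. ln (1 - r ^ Suc n))"
    using r by (simp add: norm_one_minus_of_real_power del: power_Suc)
  then have "(\<lambda>k. r ^ k / (1 - r ^ k) / real k) sums (\<Sum>n. - ln (1 - r ^ Suc n))"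
    using r by (intro sums_swap_nonneg[OF _ rows cols]) (simp_all add: f_def summable_minus)
  also have "(\<Sum>n. - ln (1 - r ^ Suc n)) = - ln_norm_euler_phi (of_real r)"
    using r suminf_minus[OF summable] by (simp add: ln_norm_euler_phi_of_real del: power_Suc)
  finally have "(\<lambda>k. s * (r ^ k / (1 - r ^ k) / real k)) sums (s * - ln_norm_euler_phi (of_real r))"
    by (rule sums_mult)
  moreover have "s * (r ^ k / (1 - r ^ k) / real k) = bernoulli_gf (real k * s) / (real k)^2" for k
  proof (cases "k = 0")
    case False
    define E where "E = exp (real k * s)"
    have "r ^ k = 1 / E"
      by (simp add: r_def E_def exp_minus divide_inverse power_inverse flip: exp_of_nat_mult)
    moreover have "E > 1" using False assms by (simp add: E_def)
    ultimately show ?thesis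
      using False by (simp add: bernoulli_gf_def flip: E_def) (simp add: field_simps power2_eq_square)
  qed (simp add: bernoulli_gf_def)
  ultimately show ?thesis
    by (simp add: r_def sums_iff)
qed

lemma filterlim_mult_const_at_right_0:
  fixes c :: real
  assumes "c > 0"
  shows "filterlim (\<lambda>s. c * s) (at_right 0) (at_right 0)"
proof -
  have "((\<lambda>s. c * s) \<longlongrightarrow> 0) (at_right 0)"
    by (auto intro!: tendsto_eq_intros)
  moreover have "eventually (\<lambda>s. c * s \<in> {0<..} \<and> c * s \<noteq> 0) (at_right (0::real))"
    using eventually_at_right_less[of 0] by eventually_elim (use assms in auto)
  ultimately show ?thesis unfolding filterlim_at by auto
qed

lemma tendsto_scaled_ln_euler_phi:
  "((\<lambda>s. s * ln_norm_euler_phi (of_real (exp (-s)))) \<longlongrightarrow> - basel_sum) (at_right 0)"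
proof -
  define a where "a = (\<lambda>k s. bernoulli_gf (real k * s) / (real k)^2)"
  have lim: "(a k \<longlongrightarrow> 1 / (real k)^2) (at_right 0)" for k
  proof (cases "k = 0")
    case False
    have "((\<lambda>s. bernoulli_gf (real k * s)) \<longlongrightarrow> 1) (at_right 0)"
      using filterlim_compose[OF tendsto_bernoulli_gf filterlim_mult_const_at_right_0[of "real k"]] False
      by simp
    then show ?thesis unfolding a_def by (intro tendsto_divide tendsto_const) (use False in simp_all)
  qed (simp add: a_def)
  have "eventually (\<lambda>(k, s). norm (a k s) \<le> 1 / (real k)^2) (at_top \<times>\<^sub>F at_right 0)"
  proof -
    have "eventually (\<lambda>x. True \<and> snd x > (0::real)) (at_top \<times>\<^sub>F at_right 0)"
      by (intro eventually_prodI eventually_at_right_less) simp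
    then show ?thesis
      by eventually_elim
        (auto simp: a_def bernoulli_gf_nonneg bernoulli_gf_le_1 divide_right_mono)
  qed
  moreover have "summable (\<lambda>k. 1 / (real k)^2)"
    using inverse_power_summable[of 2, where 'a=real] by (simp add: inverse_eq_divide)
  ultimately have "((\<lambda>s. \<Sum>k. a k s) \<longlongrightarrow> basel_sum) (at_right 0)"
    using tannerys_theorem[OF lim] trivial_limit_at_right_real by (auto simp: basel_sum_def)
  moreover have "eventually (\<lambda>s. - (\<Sum>k. a k s) = s * ln_norm_euler_phi (of_real (exp (-s)))) (at_right 0)"
    using eventually_at_right_less[of 0]
    by eventually_elim (simp add: scaled_ln_euler_phi_eq a_def)
  ultimately show ?thesis
    by (rule Lim_transform_eventually[OF tendsto_minus])
qed

section \<open>Euler's function near a root of unity\<close>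

lemma inj_on_power_Suc_root_of_unity:
  fixes \<zeta> :: "'a::idom"
  assumes ord: "\<And>k. \<zeta> ^ k = 1 \<longleftrightarrow> m dvd k"
  shows "inj_on (\<lambda>k. \<zeta> ^ Suc k) {..<m}"
proof -
  have neq: "\<zeta> ^ Suc a \<noteq> \<zeta> ^ Suc b" if "a < b" "b < m" for a b
  proof
    assume eq: "\<zeta> ^ Suc a = \<zeta> ^ Suc b"
    have "\<zeta> \<noteq> 0" using ord[of m] that by (auto simp: power_0_left)
    have "\<zeta> ^ Suc b = \<zeta> ^ Suc a * \<zeta> ^ (b - a)"
      using that by (simp flip: power_add)
    then have "\<zeta> ^ (b - a) = 1"
      using eq \<open>\<zeta> \<noteq> 0\<close> by (metis mult_cancel_left1 power_not_zero)
    then have "m dvd (b - a)" using ord by simp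
    then show False using that by (auto dest: dvd_imp_le)
  qed
  show ?thesis
  proof (rule inj_onI)
    fix a b assume "a \<in> {..<m}" "b \<in> {..<m}" "\<zeta> ^ Suc a = \<zeta> ^ Suc b"
    then show "a = b"
      using neq[of a b] neq[of b a] by (cases a b rule: linorder_cases) auto
  qed
qed

lemma prod_minus_root_of_unity:
  fixes \<zeta> z :: "'a::idom"
  assumes m: "m > 0" and ord: "\<And>k. \<zeta> ^ k = 1 \<longleftrightarrow> m dvd k"
  shows "(\<Prod>k<m. z - \<zeta> ^ Suc k) = z ^ m - 1"
proof -
  define P where "P = (\<Prod>k<m. [:- (\<zeta> ^ Suc k), 1:])"
  define Q where "Q = (monom 1 m - 1 :: 'a poly)"
  have "P = Q"
  proof (rule poly_eqI_degree_lead_coeff[of P m Q "(\<lambda>k. \<zeta> ^ Suc k) ` {..<m}"])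
    have "degree P = m" "lead_coeff P = 1"
      unfolding P_def by (subst degree_prod_eq_sum_degree lead_coeff_prod; simp)+
    then show "degree P \<le> m" "poly.coeff P m = poly.coeff Q m"
      using m by (simp_all add: Q_def coeff_monom)
    show "degree Q \<le> m"
      unfolding Q_def by (intro order.trans[OF degree_diff_le_max]) (auto simp: degree_monom_le)
    show "m \<le> card ((\<lambda>k. \<zeta> ^ Suc k) ` {..<m})"
      using inj_on_power_Suc_root_of_unity[OF ord] by (simp add: card_image)
  next
    fix x assume "x \<in> (\<lambda>k. \<zeta> ^ Suc k) ` {..<m}"
    then obtain k where k: "k < m" "x = \<zeta> ^ Suc k" by auto
    have "x ^ m = (\<zeta> ^ m) ^ Suc k"
      by (simp only: k(2) mult.commute flip: power_mult)
    then have "x ^ m = 1" using ord[of m] by simp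
    moreover have "poly P x = 0"
      unfolding P_def poly_prod using k by (intro prod_zero) auto
    ultimately show "poly P x = poly Q x" by (simp add: Q_def poly_monom)
  qed
  show ?thesis
    using arg_cong[OF \<open>P = Q\<close>, of "\<lambda>P. poly P z"] by (simp add: P_def Q_def poly_prod poly_monom)
qed

lemma prod_one_minus_root_of_unity:
  fixes \<zeta> R :: "'a::field"
  assumes m: "m > 0" and ord: "\<And>k. \<zeta> ^ k = 1 \<longleftrightarrow> m dvd k"
  shows "(\<Prod>k<m. 1 - \<zeta> ^ Suc k * R) = 1 - R ^ m"
proof (cases "R = 0")
  case False
  have "(\<Prod>k<m. 1 - \<zeta> ^ Suc k * R) = (\<Prod>k<m. R * (1 / R - \<zeta> ^ Suc k))"
    using False by (intro prod.cong) (auto simp: field_simps)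
  also have "\<dots> = R ^ m * ((1 / R) ^ m - 1)"
    by (simp only: prod.distrib prod_constant card_lessThan prod_minus_root_of_unity[OF m ord])
  also have "\<dots> = 1 - R ^ m"
    using False by (simp add: field_simps power_divide)
  finally show ?thesis .
qed (use m in simp)

lemma Re_lt_1_if_norm_eq_1:
  fixes z :: complex
  assumes "norm z = 1" "z \<noteq> 1"
  shows "Re z < 1"
proof (rule ccontr)
  assume "\<not> Re z < 1"
  then have "Re z = 1" using complex_Re_le_cmod[of z] assms(1) by simp
  moreover have "(Re z)^2 + (Im z)^2 = 1" using assms(1) cmod_power2[of z] by simp
  ultimately have "z = 1" by (simp add: complex_eq_iff)
  with assms(2) show False ..
qed

lemma norm_one_minus_unit_mult_ge:
  fixes \<omega> :: complex
  assumes "norm \<omega> = 1" "Re \<omega> \<le> c" "c < 1" "0 \<le> u" "u \<le> 1"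
  shows "sqrt (min (1/4) (1 - c)) \<le> norm (1 - \<omega> * of_real u)"
proof -
  have "(norm (1 - \<omega> * of_real u))^2 = (1 - u * Re \<omega>)^2 + (u * Im \<omega>)^2"
    by (simp add: cmod_power2 algebra_simps)
  also have "\<dots> = 1 - 2 * u * Re \<omega> + u^2 * ((Re \<omega>)^2 + (Im \<omega>)^2)"
    by (simp add: power2_eq_square algebra_simps)
  also have "(Re \<omega>)^2 + (Im \<omega>)^2 = 1" using assms(1) cmod_power2[of \<omega>] by simp
  finally have "(norm (1 - \<omega> * of_real u))^2 = (1 - u)^2 + 2 * u * (1 - Re \<omega>)"
    by (simp add: power2_eq_square algebra_simps)
  moreover have "min (1/4) (1 - c) \<le> (1 - u)^2 + 2 * u * (1 - Re \<omega>)"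
  proof (cases "u \<le> 1/2")
    case True
    then have "(1/2)^2 \<le> (1 - u)^2" using assms by (intro power_mono) auto
    then have "1/4 \<le> (1 - u)^2" by (simp add: power2_eq_square)
    moreover have "0 \<le> 2 * u * (1 - Re \<omega>)" using assms by simp
    ultimately show ?thesis by linarith
  next
    case False
    then have "1 * (1 - Re \<omega>) \<le> 2 * u * (1 - Re \<omega>)"
      using assms by (intro mult_right_mono) auto
    moreover have "1 - c \<le> 1 * (1 - Re \<omega>)" using assms by simp
    ultimately have "1 - c \<le> 2 * u * (1 - Re \<omega>)" by (rule order_trans[rotated])
    then show ?thesis by (simp add: add_increasing)
  qed
  ultimately have "sqrt (min (1/4) (1 - c)) \<le> sqrt ((norm (1 - \<omega> * of_real u))^2)"
    by (intro real_sqrt_le_mono) simp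
  then show ?thesis by simp
qed

lemma root_of_unity_gap:
  fixes \<zeta> :: complex
  assumes m: "m > 0" and ord: "\<And>k. \<zeta> ^ k = 1 \<longleftrightarrow> m dvd k"
  obtains \<delta> where "\<delta> > 0"
    and "\<And>k u. \<not> m dvd k \<Longrightarrow> 0 \<le> u \<Longrightarrow> u \<le> 1 \<Longrightarrow> \<delta> \<le> norm (1 - \<zeta> ^ k * of_real u)"
proof -
  have norm_\<zeta>: "norm \<zeta> = 1" using power_eq_1_iff[of \<zeta> m] ord[of m] m by simp
  define c where "c = Max (insert 0 ((\<lambda>k. Re (\<zeta> ^ k)) ` {1..<m}))"
  have "Re (\<zeta> ^ k) < 1" if "k \<in> {1..<m}" for k
    using that ord[of k] by (intro Re_lt_1_if_norm_eq_1) (auto simp: norm_power norm_\<zeta> dest: dvd_imp_le)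
  then have "c < 1" by (auto simp: c_def)
  have Re_le: "Re (\<zeta> ^ k) \<le> c" if "\<not> m dvd k" for k
  proof -
    have "\<zeta> ^ k = \<zeta> ^ (m * (k div m) + k mod m)" by simp
    also have "\<dots> = (\<zeta> ^ m) ^ (k div m) * \<zeta> ^ (k mod m)" by (simp only: power_add power_mult)
    finally
    have "\<zeta> ^ k = \<zeta> ^ (k mod m)" using ord[of m] by simp
    moreover have "k mod m \<in> {1..<m}" using that m by (simp add: dvd_eq_mod_eq_0)
    ultimately show ?thesis unfolding c_def by (intro Max_ge) auto
  qed
  show ?thesis
  proof
    show "sqrt (min (1/4) (1 - c)) > 0" using \<open>c < 1\<close> by simp
    show "sqrt (min (1/4) (1 - c)) \<le> norm (1 - \<zeta> ^ k * of_real u)"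
      if "\<not> m dvd k" "0 \<le> u" "u \<le> 1" for k u
      using that Re_le \<open>c < 1\<close> by (intro norm_one_minus_unit_mult_ge) (simp_all add: norm_power norm_\<zeta>)
  qed
qed

lemma abs_ln_diff_le:
  fixes x y d :: real
  assumes "d > 0" "d \<le> x" "d \<le> y"
  shows "\<bar>ln x - ln y\<bar> \<le> \<bar>x - y\<bar> / d"
proof -
  have *: "ln a - ln b \<le> (a - b) / d" if "b \<le> a" "d \<le> b" for a b
  proof -
    have "ln a - ln b = ln (a / b)" using that assms by (simp add: ln_div)
    also have "\<dots> \<le> a / b - 1" using that assms by (intro ln_le_minus_one) simp
    also have "\<dots> = (a - b) / b" using that assms by (simp add: field_simps)
    also have "\<dots> \<le> (a - b) / d" using that assms by (intro divide_left_mono) auto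
    finally show ?thesis .
  qed
  show ?thesis
    using *[of x y] *[of y x] assms by (cases "y \<le> x") (simp_all add: abs_if)
qed

lemma abs_ln_norm_one_minus_diff_le:
  fixes \<omega> :: complex
  assumes "norm \<omega> = 1" "\<delta> > 0" "\<delta> \<le> norm (1 - \<omega> * of_real u)" "\<delta> \<le> norm (1 - \<omega> * of_real v)"
  shows "\<bar>ln (norm (1 - \<omega> * of_real u)) - ln (norm (1 - \<omega> * of_real v))\<bar> \<le> \<bar>u - v\<bar> / \<delta>"
proof -
  have "\<bar>norm (1 - \<omega> * of_real u) - norm (1 - \<omega> * of_real v)\<bar> \<le> norm (\<omega> * of_real (v - u))"
    using norm_triangle_ineq3[of "1 - \<omega> * of_real u" "1 - \<omega> * of_real v"]
    by (simp add: algebra_simps)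
  also have "\<dots> = \<bar>u - v\<bar>"
    using assms(1) by (simp only: norm_mult norm_of_real abs_minus_commute mult_1)
  finally show ?thesis
    using abs_ln_diff_le[OF assms(2-4)] assms(2) by (meson divide_right_mono less_imp_le order_trans)
qed

lemma next_multiple_bounds:
  fixes m n :: nat
  assumes "m > 0"
  shows "Suc n \<le> (n div m + 1) * m" "(n div m + 1) * m < Suc n + m"
proof -
  have "n div m * m + n mod m = n" "n mod m < m" "(n div m + 1) * m = n div m * m + m"
    using assms by simp_all
  then show "Suc n \<le> (n div m + 1) * m" "(n div m + 1) * m < Suc n + m" by linarith+
qed

lemma sum_ln_norm_one_minus_root_of_unity:
  fixes \<zeta> R :: complex
  assumes m: "m > 0" and ord: "\<And>k. \<zeta> ^ k = 1 \<longleftrightarrow> m dvd k" and "norm R < 1"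
  shows "(\<Sum>k<m. ln (norm (1 - \<zeta> ^ Suc k * R))) = ln (norm (1 - R ^ m))"
proof -
  have lt: "norm (\<zeta> ^ Suc k * R) < 1" for k
    using assms power_eq_1_iff[of \<zeta> m] ord[of m] by (simp add: norm_mult norm_power)
  have "1 - \<zeta> ^ Suc k * R \<noteq> 0" for k
  proof
    assume "1 - \<zeta> ^ Suc k * R = 0"
    then have "\<zeta> ^ Suc k * R = 1" by simp
    with lt[of k] show False by simp
  qed
  then have "(\<Sum>k<m. ln (norm (1 - \<zeta> ^ Suc k * R))) = ln (\<Prod>k<m. norm (1 - \<zeta> ^ Suc k * R))"
    by (simp add: ln_prod del: power_Suc)
  also have "\<dots> = ln (norm (1 - R ^ m))"
    by (simp only: prod_norm prod_one_minus_root_of_unity[OF m ord])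
  finally show ?thesis .
qed

text \<open>Rounding every exponent \<open>n + 1\<close> up to the next multiple of \<open>m\<close> makes each block of \<open>m\<close>
  consecutive factors run over all \<open>m\<close>-th roots of unity, so the block collapses to a single
  factor \<open>1 - (r\<^sup>m\<^sup>m)\<^sup>l\<^sup>+\<^sup>1\<close>.\<close>
lemma sums_ln_norm_root_of_unity_blocks:
  fixes \<zeta> :: complex
  assumes m: "m > 0" and ord: "\<And>k. \<zeta> ^ k = 1 \<longleftrightarrow> m dvd k" and r: "0 < r" "r < 1"
  shows "(\<lambda>n. ln (norm (1 - \<zeta> ^ Suc n * of_real (r ^ ((n div m + 1) * m)))))
           sums ln_norm_euler_phi (of_real (r ^ (m * m)))"
proof -
  define b where "b = (\<lambda>n. ln (norm (1 - \<zeta> ^ Suc n * of_real (r ^ ((n div m + 1) * m)))))"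
  have norm_\<zeta>: "norm \<zeta> = 1" using power_eq_1_iff[of \<zeta> m] ord[of m] m by simp
  have "r ^ ((n div m + 1) * m) \<le> r ^ Suc n" for n
    using r next_multiple_bounds[OF m] by (intro power_decreasing) auto
  then have "summable b"
    unfolding b_def using r
    by (intro summable_ln_norm_one_minus[OF r]) (simp add: norm_mult norm_power norm_\<zeta>)
  have block: "sum b {l * m..<l * m + m} = ln (norm (1 - of_real (r ^ (m * m)) ^ Suc l :: complex))"
    for l
  proof -
    define R where "R = (of_real (r ^ ((l + 1) * m)) :: complex)"
    have "sum b {l * m..<l * m + m} = (\<Sum>k<m. b (k + l * m))"
      by (simp add: sum.shift_bounds_nat_ivl[of b 0 "l * m" m, simplified] atLeast0LessThan add.commute)
    also have "\<dots> = (\<Sum>k<m. ln (norm (1 - \<zeta> ^ Suc k * R)))"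
    proof (intro sum.cong refl)
      fix k assume "k \<in> {..<m}"
      then have div: "(k + l * m) div m = l" using m by simp
      have pow: "\<zeta> ^ Suc (k + l * m) = \<zeta> ^ Suc k"
        using ord[of m] by (simp add: power_add mult.commute[of l] power_mult)
      show "b (k + l * m) = ln (norm (1 - \<zeta> ^ Suc k * R))"
        by (simp only: b_def R_def div pow)
    qed
    also have "\<dots> = ln (norm (1 - R ^ m))"
    proof (rule sum_ln_norm_one_minus_root_of_unity[OF m ord])
      show "norm R < 1" unfolding R_def norm_of_real using r m by (simp add: power_less_one_iff)
    qed
    also have "R ^ m = of_real (r ^ (m * m)) ^ Suc l"
    proof -
      have "(l + 1) * m * m = m * m * Suc l" by (simp add: algebra_simps)
      then show ?thesis by (simp only: R_def power_mult[symmetric] of_real_power[symmetric])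
    qed
    finally show ?thesis .
  qed
  have "(\<lambda>l. sum b {l * m..<l * m + m}) sums suminf b"
    by (rule sums_group[OF summable_sums[OF \<open>summable b\<close>] m])
  then have "suminf b = ln_norm_euler_phi (of_real (r ^ (m * m)))"
    by (simp add: block ln_norm_euler_phi_def sums_iff)
  then show ?thesis
    unfolding b_def[symmetric] using summable_sums[OF \<open>summable b\<close>] by simp
qed

lemma ln_norm_twisted_term_shift:
  fixes \<zeta> :: complex
  assumes m: "m > 0" and ord: "\<And>k. \<zeta> ^ k = 1 \<longleftrightarrow> m dvd k"
    and \<delta>: "\<delta> > 0" "\<And>k u. \<not> m dvd k \<Longrightarrow> 0 \<le> u \<Longrightarrow> u \<le> 1 \<Longrightarrow> \<delta> \<le> norm (1 - \<zeta> ^ k * of_real u)"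
    and r: "0 < r" "r < 1"
  shows "\<bar>ln (norm (1 - \<zeta> ^ Suc n * of_real (r ^ Suc n)))
           - ln (norm (1 - \<zeta> ^ Suc n * of_real (r ^ ((n div m + 1) * m))))\<bar>
         \<le> (1 - r ^ m) / \<delta> * r ^ Suc n"
proof -
  define e where "e = (n div m + 1) * m"
  have e: "Suc n \<le> e" "e - Suc n < m"
    using next_multiple_bounds[OF m, of n] by (simp_all add: e_def)
  show ?thesis
  proof (cases "m dvd Suc n")
    case True
    have "m dvd e" by (simp add: e_def)
    then have "m dvd e - Suc n" using True by (rule dvd_diff_nat)
    then have "e - Suc n = 0" using e(2) by (auto dest: dvd_imp_le)
    then have "e = Suc n" using e(1) by simp
    moreover have "r ^ m \<le> 1" using r by (simp add: power_le_one)
    ultimately show ?thesis using r \<delta> by (simp only: e_def[symmetric]) simp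
  next
    case False
    define u v where "u = r ^ Suc n" and "v = r ^ e"
    have uv: "0 \<le> v" "v \<le> u" "u \<le> 1"
      using r e by (auto simp: u_def v_def power_le_one intro!: power_decreasing simp del: power_Suc)
    have "u * r ^ m \<le> v"
    proof -
      have "v = u * r ^ (e - Suc n)"
        using e(1) by (simp add: u_def v_def flip: power_add del: power_Suc)
      moreover have "r ^ m \<le> r ^ (e - Suc n)" using r e by (intro power_decreasing) auto
      ultimately show ?thesis using uv by (simp add: mult_left_mono)
    qed
    then have diff: "\<bar>u - v\<bar> \<le> (1 - r ^ m) * u" using uv by (simp add: algebra_simps)
    have "\<bar>ln (norm (1 - \<zeta> ^ Suc n * of_real u)) - ln (norm (1 - \<zeta> ^ Suc n * of_real v))\<bar>
          \<le> \<bar>u - v\<bar> / \<delta>"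
      using False uv power_eq_1_iff[of \<zeta> m] ord[of m] m
      by (intro abs_ln_norm_one_minus_diff_le \<delta>) (auto simp: norm_power norm_mult)
    also have "\<dots> \<le> (1 - r ^ m) / \<delta> * u"
      using divide_right_mono[OF diff, of \<delta>] \<delta> by simp
    finally show ?thesis by (simp only: u_def v_def e_def)
  qed
qed

lemma ln_norm_euler_phi_twisted_diff_le:
  fixes \<zeta> :: complex
  assumes m: "m > 0" and ord: "\<And>k. \<zeta> ^ k = 1 \<longleftrightarrow> m dvd k"
    and \<delta>: "\<delta> > 0" "\<And>k u. \<not> m dvd k \<Longrightarrow> 0 \<le> u \<Longrightarrow> u \<le> 1 \<Longrightarrow> \<delta> \<le> norm (1 - \<zeta> ^ k * of_real u)"
    and t: "t > 0"
  shows "\<bar>ln_norm_euler_phi (\<zeta> * of_real (exp (-t)))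
           - ln_norm_euler_phi (of_real (exp (- (real m ^ 2 * t))))\<bar> \<le> real m / \<delta>"
proof -
  define r where "r = exp (-t)"
  have r: "0 < r" "r < 1" using t by (simp_all add: r_def)
  have norm_\<zeta>: "norm \<zeta> = 1" using power_eq_1_iff[of \<zeta> m] ord[of m] m by simp
  define a where "a = (\<lambda>n. ln (norm (1 - \<zeta> ^ Suc n * of_real (r ^ Suc n))))"
  define b where "b = (\<lambda>n. ln (norm (1 - \<zeta> ^ Suc n * of_real (r ^ ((n div m + 1) * m)))))"
  define c where "c = (\<lambda>n. (1 - r ^ m) / \<delta> * r ^ Suc n)"
  have "summable a"
    unfolding a_def using r
    by (intro summable_ln_norm_one_minus[OF r]) (simp add: norm_mult norm_power norm_\<zeta>)
  moreover have "(\<zeta> * of_real r) ^ Suc n = \<zeta> ^ Suc n * of_real (r ^ Suc n)" for n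
    by (simp add: power_mult_distrib)
  ultimately have "a sums ln_norm_euler_phi (\<zeta> * of_real r)"
    unfolding ln_norm_euler_phi_def by (simp only: a_def summable_sums)
  moreover have "r ^ (m * m) = exp (- (real m ^ 2 * t))"
    by (simp add: r_def power2_eq_square mult.assoc flip: exp_of_nat_mult)
  then have "b sums ln_norm_euler_phi (of_real (exp (- (real m ^ 2 * t))))"
    using sums_ln_norm_root_of_unity_blocks[OF m ord r] by (simp add: b_def)
  moreover have "(\<lambda>n. r * r ^ n) sums (r * (1 / (1 - r)))"
    using r by (intro sums_mult geometric_sums) simp
  then have "c sums ((1 - r ^ m) / \<delta> * (r / (1 - r)))"
    unfolding c_def by (intro sums_mult) simp
  moreover have "\<bar>a n - b n\<bar> \<le> c n" for n
    unfolding a_def b_def c_def by (rule ln_norm_twisted_term_shift[OF m ord \<delta> r])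
  ultimately have "\<bar>ln_norm_euler_phi (\<zeta> * of_real r)
                    - ln_norm_euler_phi (of_real (exp (- (real m ^ 2 * t))))\<bar>
                   \<le> (1 - r ^ m) / \<delta> * (r / (1 - r))"
    by (metis (no_types, lifting) sums_diff sums_iff real_norm_def norm_suminf_le)
  also have "\<dots> \<le> real m * t / \<delta> * (r / (1 - r))"
  proof -
    have "1 - real m * t \<le> r ^ m"
      using exp_ge_add_one_self[of "- (real m * t)"] by (simp add: r_def flip: exp_of_nat_mult)
    then show ?thesis
      using r \<delta> by (intro mult_right_mono divide_right_mono) auto
  qed
  also have "\<dots> = real m / \<delta> * bernoulli_gf t"
    using r t by (simp add: bernoulli_gf_def r_def exp_minus field_simps)
  also have "\<dots> \<le> real m / \<delta>"
    using bernoulli_gf_le_1[of t] \<delta> t by (intro mult_left_le) auto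
  finally show ?thesis by (simp add: r_def)
qed

lemma tendsto_scaled_ln_euler_phi_twisted:
  fixes \<zeta> :: complex
  assumes m: "m > 0" and ord: "\<And>k. \<zeta> ^ k = 1 \<longleftrightarrow> m dvd k"
  shows "((\<lambda>t. t * ln_norm_euler_phi (\<zeta> * of_real (exp (-t)))) \<longlongrightarrow> - basel_sum / (real m)^2) (at_right 0)"
proof -
  obtain \<delta> where \<delta>: "\<delta> > 0"
    "\<And>k u. \<not> m dvd k \<Longrightarrow> 0 \<le> u \<Longrightarrow> u \<le> 1 \<Longrightarrow> \<delta> \<le> norm (1 - \<zeta> ^ k * of_real u)"
    using root_of_unity_gap[OF m ord] by blast
  have "((\<lambda>t. (real m ^ 2 * t) * ln_norm_euler_phi (of_real (exp (- (real m ^ 2 * t)))))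
          \<longlongrightarrow> - basel_sum) (at_right 0)"
    using filterlim_compose[OF tendsto_scaled_ln_euler_phi filterlim_mult_const_at_right_0[of "real m ^ 2"]] m
    by simp
  then have "((\<lambda>t. t * ln_norm_euler_phi (of_real (exp (- (real m ^ 2 * t)))))
               \<longlongrightarrow> - basel_sum / (real m)^2) (at_right 0)"
    using m by (auto dest: tendsto_divide[OF _ tendsto_const[of "real m ^ 2"]] simp: field_simps)
  moreover have "((\<lambda>t. t * ln_norm_euler_phi (\<zeta> * of_real (exp (-t)))
                       - t * ln_norm_euler_phi (of_real (exp (- (real m ^ 2 * t))))) \<longlongrightarrow> 0) (at_right 0)"
  proof (rule Lim_null_comparison)
    show "eventually (\<lambda>t. norm (t * ln_norm_euler_phi (\<zeta> * of_real (exp (-t)))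
            - t * ln_norm_euler_phi (of_real (exp (- (real m ^ 2 * t))))) \<le> t * (real m / \<delta>)) (at_right 0)"
      using eventually_at_right_less[of 0]
    proof eventually_elim
      case (elim t)
      then have "norm (t * ln_norm_euler_phi (\<zeta> * of_real (exp (-t)))
                  - t * ln_norm_euler_phi (of_real (exp (- (real m ^ 2 * t)))))
                 = t * \<bar>ln_norm_euler_phi (\<zeta> * of_real (exp (-t)))
                        - ln_norm_euler_phi (of_real (exp (- (real m ^ 2 * t))))\<bar>"
        by (simp add: abs_mult flip: right_diff_distrib)
      also have "\<dots> \<le> t * (real m / \<delta>)"
      proof (rule mult_left_mono)
        show "\<bar>ln_norm_euler_phi (\<zeta> * of_real (exp (-t)))
                - ln_norm_euler_phi (of_real (exp (- (real m ^ 2 * t))))\<bar> \<le> real m / \<delta>"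
          by (rule ln_norm_euler_phi_twisted_diff_le[OF m ord \<delta>(1) _ elim]) (fact \<delta>(2))
      qed (use elim in simp)
      finally show ?case .
    qed
    show "((\<lambda>t. t * (real m / \<delta>)) \<longlongrightarrow> 0) (at_right 0)"
      using \<delta>(1) by (auto intro!: tendsto_eq_intros)
  qed
  ultimately show ?thesis
    by (auto dest: tendsto_add)
qed

section \<open>Growth of \<open>g\<close> towards the cusps\<close>

lemma ln_norm_euler_phi_eq_ln_norm_prodinf:
  fixes q :: complex
  assumes "norm q < 1"
  shows "(\<Prod>n. 1 - q ^ Suc n) \<noteq> 0" "ln_norm_euler_phi q = ln (norm (\<Prod>n. 1 - q ^ Suc n))"
proof -
  define f where "f = (\<lambda>n. 1 - q ^ Suc n)"
  have nz: "f n \<noteq> 0" for n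
  proof
    assume "f n = 0"
    then have "norm (q ^ Suc n) = 1" by (simp add: f_def)
    moreover have "norm (q ^ Suc n) < 1"
      using assms by (simp add: norm_power power_less_one_iff del: power_Suc)
    ultimately show False by simp
  qed
  have "summable (\<lambda>k. norm (- (q ^ Suc k)))"
    using assms by (simp add: norm_power summable_geometric del: power_Suc) (simp add: summable_mult)
  moreover have "- (q ^ Suc k) \<noteq> -1" for k using nz[of k] by (simp add: f_def)
  ultimately have "convergent_prod f"
    using summable_imp_convergent_prod_complex[of "\<lambda>k. - (q ^ Suc k)"] by (simp add: f_def)
  then show "(\<Prod>n. 1 - q ^ Suc n) \<noteq> 0"
    using nz by (simp add: f_def prodinf_nonzero)
  then have "(\<lambda>n. ln (norm (f n))) sums ln (norm (prodinf f))"
    using nz \<open>convergent_prod f\<close>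
    by (intro has_prod_imp_sums_ln_real' has_prod_norm convergent_prod_has_prod) auto
  then show "ln_norm_euler_phi q = ln (norm (\<Prod>n. 1 - q ^ Suc n))"
    by (simp add: ln_norm_euler_phi_def f_def sums_iff)
qed

lemma ln_norm_dedekind_eta:
  assumes "Im \<tau> > 0"
  shows "dedekind_eta \<tau> \<noteq> 0"
    and "ln (norm (dedekind_eta \<tau>)) = - (pi * Im \<tau> / 12) + ln_norm_euler_phi (qnome \<tau>)"
proof -
  have "norm (qnome \<tau>) < 1" using assms by (simp add: qnome_def norm_exp_eq_Re)
  note prod = ln_norm_euler_phi_eq_ln_norm_prodinf[OF this]
  have "dedekind_eta \<tau> = exp (2 * of_real pi * \<i> * \<tau> / 24) * (\<Prod>n. 1 - qnome \<tau> ^ Suc n)"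
    by (simp add: dedekind_eta_def)
  moreover have "norm (exp (2 * of_real pi * \<i> * \<tau> / 24)) = exp (- (pi * Im \<tau> / 12))"
    by (simp add: norm_exp_eq_Re)
  ultimately show "dedekind_eta \<tau> \<noteq> 0"
    and "ln (norm (dedekind_eta \<tau>)) = - (pi * Im \<tau> / 12) + ln_norm_euler_phi (qnome \<tau>)"
    using prod by (simp_all add: norm_mult ln_mult)
qed

lemma qnome_eq_polar:
  "qnome \<tau> = exp (2 * of_real pi * \<i> * of_real (Re \<tau>)) * of_real (exp (- (2 * pi * Im \<tau>)))"
proof -
  have "2 * of_real pi * \<i> * \<tau> = 2 * of_real pi * \<i> * of_real (Re \<tau>) + of_real (- (2 * pi * Im \<tau>))"
    by (simp add: complex_eq_iff)
  then show ?thesis by (simp only: qnome_def exp_add exp_of_real)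
qed

lemma exp_rational_power_eq_1_iff:
  fixes j n :: nat
  assumes "coprime j n" "n > 0"
  shows "exp (2 * of_real pi * \<i> * of_real (real j / real n)) ^ k = 1 \<longleftrightarrow> n dvd k"
proof -
  have "exp (2 * of_real pi * \<i> * of_real (real j / real n)) ^ k
        = exp (2 * of_real pi * \<i> * of_nat (k * j) / of_nat n)"
    by (simp add: field_simps flip: exp_of_nat_mult)
  then have "exp (2 * of_real pi * \<i> * of_real (real j / real n)) ^ k = 1 \<longleftrightarrow> n dvd k * j"
    using complex_root_unity_eq_1[of n "k * j"] assms(2) by simp
  also have "\<dots> \<longleftrightarrow> n dvd k"
    using assms(1) by (simp add: coprime_dvd_mult_left_iff coprime_commute)
  finally show ?thesis .
qed

lemma tendsto_ln_norm_euler_phi_qnome_cusp: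
  fixes \<tau> :: "real \<Rightarrow> complex" and j n :: nat
  assumes c: "c > 0" and n: "n > 0" and cp: "coprime j n"
    and Re: "\<And>y. Re (\<tau> y) = real j / real n" and Im: "\<And>y. Im (\<tau> y) = c * y"
  shows "((\<lambda>y. y * ln_norm_euler_phi (qnome (\<tau> y))) \<longlongrightarrow> - basel_sum / (2 * pi * c * (real n)^2))
           (at_right 0)"
proof -
  define \<zeta> where "\<zeta> = exp (2 * of_real pi * \<i> * of_real (real j / real n))"
  have ord: "\<zeta> ^ k = 1 \<longleftrightarrow> n dvd k" for k
    unfolding \<zeta>_def by (rule exp_rational_power_eq_1_iff[OF cp n])
  have "2 * pi * c > 0" using c by simp
  from filterlim_compose[OF tendsto_scaled_ln_euler_phi_twisted[OF n ord]
         filterlim_mult_const_at_right_0[OF this]]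
  have "((\<lambda>y. (2 * pi * c * y) * ln_norm_euler_phi (\<zeta> * of_real (exp (- (2 * pi * c * y)))))
          \<longlongrightarrow> - basel_sum / (real n)^2) (at_right 0)"
    by (simp add: o_def)
  then have "((\<lambda>y. (2 * pi * c * y) * ln_norm_euler_phi (\<zeta> * of_real (exp (- (2 * pi * c * y))))
                   / (2 * pi * c))
               \<longlongrightarrow> - basel_sum / (real n)^2 / (2 * pi * c)) (at_right 0)"
    by (rule tendsto_divide) (use c in auto)
  moreover have "qnome (\<tau> y) = \<zeta> * of_real (exp (- (2 * pi * c * y)))" for y
    by (simp add: qnome_eq_polar Re Im \<zeta>_def mult.assoc)
  ultimately show ?thesis
    using c by (simp add: field_simps)
qed

text \<open>The factors \<open>e\<^sup>2\<^sup>\<pi>\<^sup>i\<^sup>\<tau>\<^sup>/\<^sup>2\<^sup>4\<close> of the four eta quotients cancel, since \<open>2\<cdot>2 + 4\<cdot>5 = 4\<cdot>1 + 2\<cdot>10\<close>.\<close>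
lemma ln_norm_gfun:
  assumes "Im \<tau> > 0"
  shows "gfun \<tau> \<noteq> 0"
    and "ln (norm (gfun \<tau>)) =
           2 * ln_norm_euler_phi (qnome (2 * \<tau>)) + 4 * ln_norm_euler_phi (qnome (5 * \<tau>))
           - 4 * ln_norm_euler_phi (qnome \<tau>) - 2 * ln_norm_euler_phi (qnome (10 * \<tau>))"
proof -
  have Im: "Im \<tau> > 0" "Im (2 * \<tau>) > 0" "Im (5 * \<tau>) > 0" "Im (10 * \<tau>) > 0"
    using assms by simp_all
  note eta = ln_norm_dedekind_eta[OF Im(1)] ln_norm_dedekind_eta[OF Im(2)]
    ln_norm_dedekind_eta[OF Im(3)] ln_norm_dedekind_eta[OF Im(4)]
  show "gfun \<tau> \<noteq> 0" using eta by (simp add: gfun_def)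
  have "ln (norm (gfun \<tau>)) = 2 * ln (norm (dedekind_eta (2 * \<tau>))) + 4 * ln (norm (dedekind_eta (5 * \<tau>)))
          - 4 * ln (norm (dedekind_eta \<tau>)) - 2 * ln (norm (dedekind_eta (10 * \<tau>)))"
    using eta by (simp add: gfun_def norm_divide norm_mult norm_power ln_div ln_mult ln_realpow)
  also have "\<dots> = 2 * ln_norm_euler_phi (qnome (2 * \<tau>)) + 4 * ln_norm_euler_phi (qnome (5 * \<tau>))
           - 4 * ln_norm_euler_phi (qnome \<tau>) - 2 * ln_norm_euler_phi (qnome (10 * \<tau>))"
    using eta by (simp add: algebra_simps)
  finally show "ln (norm (gfun \<tau>)) = \<dots>" .
qed

lemma tendsto_ln_norm_gfun_vertical:
  fixes s x :: real and ja jb jc jd na nb nc nd :: nat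
  assumes s: "s > 0" and n: "na > 0" "nb > 0" "nc > 0" "nd > 0"
    and cp: "coprime ja na" "coprime jb nb" "coprime jc nc" "coprime jd nd"
    and rational: "s * x = real ja / real na" "2 * s * x = real jb / real nb"
            "5 * s * x = real jc / real nc" "10 * s * x = real jd / real nd"
  shows "((\<lambda>y. y * ln (norm (gfun (of_real s * (of_real x + \<i> * of_real y))))) \<longlongrightarrow>
           basel_sum / (2 * pi * s) * (4 / (real na)^2 + 1 / (5 * (real nd)^2)
                                      - 1 / (real nb)^2 - 4 / (5 * (real nc)^2))) (at_right 0)"
proof -
  define \<tau> where "\<tau> y = of_real s * (of_real x + \<i> * of_real y)" for y
  define L where "L k y = y * ln_norm_euler_phi (qnome (of_real k * \<tau> y))" for k y
  define A where "A k n = - basel_sum / (2 * pi * (k * s) * (real n)^2)" for k n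
  have lim: "(L k \<longlongrightarrow> A k n) (at_right 0)"
    if "k > 0" "n > 0" "coprime j n" "k * s * x = real j / real n" for k j n
    unfolding L_def A_def using that s
    by (intro tendsto_ln_norm_euler_phi_qnome_cusp) (simp_all add: \<tau>_def mult.assoc)
  have "((\<lambda>y. 2 * L 2 y + 4 * L 5 y - 4 * L 1 y - 2 * L 10 y)
         \<longlongrightarrow> 2 * A 2 nb + 4 * A 5 nc - 4 * A 1 na - 2 * A 10 nd) (at_right 0)"
    using n cp rational by (intro tendsto_intros lim) simp_all
  moreover have "eventually (\<lambda>y. 2 * L 2 y + 4 * L 5 y - 4 * L 1 y - 2 * L 10 y
                                  = y * ln (norm (gfun (\<tau> y)))) (at_right 0)"
    using eventually_at_right_less[of 0]
    by eventually_elim (use s in \<open>simp add: L_def \<tau>_def ln_norm_gfun algebra_simps\<close>)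
  ultimately have "((\<lambda>y. y * ln (norm (gfun (\<tau> y))))
                     \<longlongrightarrow> 2 * A 2 nb + 4 * A 5 nc - 4 * A 1 na - 2 * A 10 nd) (at_right 0)"
    by (rule Lim_transform_eventually)
  moreover have "2 * A 2 nb + 4 * A 5 nc - 4 * A 1 na - 2 * A 10 nd
      = basel_sum / (2 * pi * s) * (4 / (real na)^2 + 1 / (5 * (real nd)^2)
                                    - 1 / (real nb)^2 - 4 / (5 * (real nc)^2))"
    using s n by (simp add: A_def field_simps)
  ultimately show ?thesis by (simp only: \<tau>_def)
qed

section \<open>Vanishing sums of monomials\<close>

definition max_attained_twice :: "('a \<Rightarrow> 'b::linorder) \<Rightarrow> 'a set \<Rightarrow> bool" where
  "max_attained_twice w S \<longleftrightarrow> (\<forall>s\<in>S. \<exists>t\<in>S. t \<noteq> s \<and> w s \<le> w t)"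

definition min_attained_twice :: "('a \<Rightarrow> 'b::linorder) \<Rightarrow> 'a set \<Rightarrow> bool" where
  "min_attained_twice w S \<longleftrightarrow> (\<forall>s\<in>S. \<exists>t\<in>S. t \<noteq> s \<and> w t \<le> w s)"

lemma max_attained_twiceD:
  assumes "finite S" "S \<noteq> {}" "max_attained_twice w S"
  obtains s t where "s \<in> S" "t \<in> S" "s \<noteq> t" "w t = w s" "\<And>u. u \<in> S \<Longrightarrow> w u \<le> w s"
proof -
  have "Max (w ` S) \<in> w ` S" using assms(1,2) by (intro Max_in) auto
  then obtain s where s: "s \<in> S" "w s = Max (w ` S)" by auto
  then have max: "w u \<le> w s" if "u \<in> S" for u
    using that assms(1) by simp
  obtain t where "t \<in> S" "t \<noteq> s" "w s \<le> w t"
    using assms(3) s(1) by (auto simp: max_attained_twice_def)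
  with s(1) max show thesis
    by (intro that[of s t]) (auto intro: antisym)
qed

lemma min_attained_twiceD:
  assumes "finite S" "S \<noteq> {}" "min_attained_twice w S"
  obtains s t where "s \<in> S" "t \<in> S" "s \<noteq> t" "w t = w s" "\<And>u. u \<in> S \<Longrightarrow> w s \<le> w u"
proof -
  have "Min (w ` S) \<in> w ` S" using assms(1,2) by (intro Min_in) auto
  then obtain s where s: "s \<in> S" "w s = Min (w ` S)" by auto
  then have min: "w s \<le> w u" if "u \<in> S" for u
    using that assms(1) by simp
  obtain t where "t \<in> S" "t \<noteq> s" "w t \<le> w s"
    using assms(3) s(1) by (auto simp: min_attained_twice_def)
  with s(1) min show thesis
    by (intro that[of s t]) (auto intro: antisym)
qed

lemma max_attained_twice_scale:
  fixes w :: "'a \<Rightarrow> nat" and \<kappa> :: real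
  assumes "max_attained_twice (\<lambda>s. \<kappa> * real (w s)) S"
  shows "\<kappa> > 0 \<Longrightarrow> max_attained_twice w S" and "\<kappa> < 0 \<Longrightarrow> min_attained_twice w S"
  using assms unfolding max_attained_twice_def min_attained_twice_def
  by (simp_all add: mult_le_cancel_left)

lemma max_attained_twice_image:
  "inj f \<Longrightarrow> max_attained_twice w (f ` S) \<longleftrightarrow> max_attained_twice (w \<circ> f) S"
  by (simp add: max_attained_twice_def inj_eq)

lemma min_attained_twice_image:
  "inj f \<Longrightarrow> min_attained_twice w (f ` S) \<longleftrightarrow> min_attained_twice (w \<circ> f) S"
  by (simp add: min_attained_twice_def inj_eq)

lemma weight_comp_swap: "(\<lambda>(i, j). p * i + j) \<circ> prod.swap = (\<lambda>(i, j). i + p * j :: nat)"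
  by (auto simp: fun_eq_iff)


lemma tendsto_monomial_quotient_0:
  fixes X Y :: "real \<Rightarrow> complex"
  assumes nz: "eventually (\<lambda>y. X y \<noteq> 0 \<and> Y y \<noteq> 0) (at_right 0)"
    and X: "((\<lambda>y. y * ln (norm (X y))) \<longlongrightarrow> a) (at_right 0)"
    and Y: "((\<lambda>y. y * ln (norm (Y y))) \<longlongrightarrow> b) (at_right 0)"
    and less: "a * real i + b * real j < a * real i0 + b * real j0"
  shows "((\<lambda>y. X y ^ i * Y y ^ j / (X y ^ i0 * Y y ^ j0)) \<longlongrightarrow> 0) (at_right 0)"
proof -
  define E where "E y = (real i - real i0) * ln (norm (X y)) + (real j - real j0) * ln (norm (Y y))" for y
  have "((\<lambda>y. (real i - real i0) * (y * ln (norm (X y))) + (real j - real j0) * (y * ln (norm (Y y))))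
          \<longlongrightarrow> (real i - real i0) * a + (real j - real j0) * b) (at_right 0)"
    by (intro tendsto_intros X Y)
  then have "((\<lambda>y. y * E y) \<longlongrightarrow> (real i - real i0) * a + (real j - real j0) * b) (at_right 0)"
    by (simp add: E_def algebra_simps)
  moreover have "(real i - real i0) * a + (real j - real j0) * b < 0"
    using less by (simp add: algebra_simps)
  ultimately have "filterlim (\<lambda>y. y * E y * inverse y) at_bot (at_right 0)"
    by (rule filterlim_tendsto_neg_mult_at_bot[OF _ _ filterlim_inverse_at_top_right])
  moreover have "eventually (\<lambda>y. y * E y * inverse y = E y) (at_right 0)"
    using eventually_at_right_less[of 0] by eventually_elim simp
  ultimately have "filterlim E at_bot (at_right 0)" by (simp add: filterlim_cong)
  then have lim: "((\<lambda>y. exp (E y)) \<longlongrightarrow> 0) (at_right 0)"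
    by (rule filterlim_compose[OF exp_at_bot])
  have "eventually (\<lambda>y. norm (X y ^ i * Y y ^ j / (X y ^ i0 * Y y ^ j0)) = exp (E y)) (at_right 0)"
    using nz
  proof eventually_elim
    case (elim y)
    then have pos: "norm (X y) > 0" "norm (Y y) > 0" by auto
    have "norm (X y ^ i * Y y ^ j / (X y ^ i0 * Y y ^ j0))
          = exp (real i * ln (norm (X y))) * exp (real j * ln (norm (Y y)))
            / (exp (real i0 * ln (norm (X y))) * exp (real j0 * ln (norm (Y y))))"
      using pos by (simp add: norm_mult norm_divide norm_power powr_realpow[symmetric] powr_def mult.commute)
    also have "\<dots> = exp (E y)"
      by (simp add: E_def exp_add[symmetric] exp_diff[symmetric] algebra_simps)
    finally show ?case .
  qed
  with lim have "((\<lambda>y. norm (X y ^ i * Y y ^ j / (X y ^ i0 * Y y ^ j0))) \<longlongrightarrow> 0) (at_right 0)"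
    by (simp add: tendsto_cong)
  then show ?thesis by (rule tendsto_norm_zero_cancel)
qed

text \<open>If a vanishing sum of monomials \<open>c\<^sub>i\<^sub>j X\<^sup>i Y\<^sup>j\<close> had a unique monomial of maximal growth rate
  \<open>a i + b j\<close>, dividing by that monomial would leave \<open>1 + o(1) = 0\<close>.\<close>
lemma max_attained_twice_if_monomial_sum_eq_0:
  fixes X Y :: "real \<Rightarrow> complex" and c :: "nat \<Rightarrow> nat \<Rightarrow> complex" and S :: "(nat \<times> nat) set"
  assumes fin: "finite S" and c: "\<And>i j. (i, j) \<in> S \<Longrightarrow> c i j \<noteq> 0"
    and zero: "eventually (\<lambda>y. (\<Sum>(i, j)\<in>S. c i j * X y ^ i * Y y ^ j) = 0) (at_right 0)"
    and nz: "eventually (\<lambda>y. X y \<noteq> 0 \<and> Y y \<noteq> 0) (at_right 0)"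
    and X: "((\<lambda>y. y * ln (norm (X y))) \<longlongrightarrow> a) (at_right 0)"
    and Y: "((\<lambda>y. y * ln (norm (Y y))) \<longlongrightarrow> b) (at_right 0)"
  shows "max_attained_twice (\<lambda>(i, j). a * real i + b * real j) S"
  unfolding max_attained_twice_def
proof (rule ballI, rule ccontr)
  fix s0 assume "s0 \<in> S" and unique: "\<not> (\<exists>t\<in>S. t \<noteq> s0 \<and>
      (\<lambda>(i, j). a * real i + b * real j) s0 \<le> (\<lambda>(i, j). a * real i + b * real j) t)"
  obtain i0 j0 where s0: "s0 = (i0, j0)" by fastforce
  define T where "T y = c i0 j0 * X y ^ i0 * Y y ^ j0" for y
  define \<rho> where "\<rho> = (\<lambda>s y. (case s of (i, j) \<Rightarrow> c i j * X y ^ i * Y y ^ j) / T y)"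
  have "(\<rho> s \<longlongrightarrow> 0) (at_right 0)" if "s \<in> S - {s0}" for s
  proof -
    obtain i j where s: "s = (i, j)" by fastforce
    have "a * real i + b * real j < a * real i0 + b * real j0"
      using unique that by (force simp: s s0)
    from tendsto_mult_left[OF tendsto_monomial_quotient_0[OF nz X Y this], of "c i j / c i0 j0"]
    show ?thesis
      by (simp add: \<rho>_def T_def s mult.assoc)
  qed
  then have "((\<lambda>y. \<Sum>s\<in>S - {s0}. \<rho> s y) \<longlongrightarrow> 0) (at_right 0)"
    by (intro tendsto_null_sum) auto
  then have "eventually (\<lambda>y. norm (\<Sum>s\<in>S - {s0}. \<rho> s y) < 1) (at_right 0)"
    by (intro order_tendstoD(2)[OF tendsto_norm_zero]) simp_all
  then have "eventually (\<lambda>y. False) (at_right (0::real))"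
    using zero nz
  proof eventually_elim
    case (elim y)
    then have "T y \<noteq> 0" using c \<open>s0 \<in> S\<close> by (simp add: T_def s0)
    have "(\<Sum>(i, j)\<in>S. c i j * X y ^ i * Y y ^ j)
          = T y + (\<Sum>(i, j)\<in>S - {s0}. c i j * X y ^ i * Y y ^ j)"
      using fin \<open>s0 \<in> S\<close> by (simp add: sum.remove T_def s0)
    also have "\<dots> = T y * (1 + (\<Sum>s\<in>S - {s0}. \<rho> s y))"
      using \<open>T y \<noteq> 0\<close> by (simp add: \<rho>_def distrib_left sum_distrib_left case_prod_unfold)
    finally have "1 + (\<Sum>s\<in>S - {s0}. \<rho> s y) = 0"
      using elim \<open>T y \<noteq> 0\<close> by simp
    then have "norm (\<Sum>s\<in>S - {s0}. \<rho> s y) = 1"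
      by (simp add: add_eq_0_iff)
    then show False using elim by simp
  qed
  then show False by (simp add: trivial_limit_at_right_real)
qed


section \<open>Modular relations for \<open>g\<close>\<close>

definition bipoly_support :: "nat \<Rightarrow> (nat \<Rightarrow> nat \<Rightarrow> rat) \<Rightarrow> (nat \<times> nat) set" where
  "bipoly_support N C = {(i, j). i \<le> N \<and> j \<le> N \<and> C i j \<noteq> 0}"

lemma finite_bipoly_support: "finite (bipoly_support N C)"
  by (rule finite_subset[of _ "{..N} \<times> {..N}"]) (auto simp: bipoly_support_def)

lemma eval_bipoly_eq_sum_support:
  "eval_bipoly N C x y = (\<Sum>(i, j)\<in>bipoly_support N C. of_rat (C i j) * x ^ i * y ^ j)"
proof -
  have "eval_bipoly N C x y = (\<Sum>(i, j)\<in>{..N} \<times> {..N}. of_rat (C i j) * x ^ i * y ^ j)"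
    by (simp only: eval_bipoly_def sum.cartesian_product)
  also have "\<dots> = (\<Sum>(i, j)\<in>bipoly_support N C. of_rat (C i j) * x ^ i * y ^ j)"
    by (rule sum.mono_neutral_right) (auto simp: bipoly_support_def)
  finally show ?thesis .
qed

lemma modular_relation_extremal_weight:
  fixes p u v :: nat and x \<kappa> :: real
  assumes rel: "\<And>\<tau>. Im \<tau> > 0 \<Longrightarrow> eval_bipoly N C (gfun \<tau>) (gfun (of_nat p * \<tau>)) = 0"
    and "p > 0"
    and X: "((\<lambda>y. y * ln (norm (gfun (of_real x + \<i> * of_real y)))) \<longlongrightarrow> \<kappa> * real u) (at_right 0)"
    and Y: "((\<lambda>y. y * ln (norm (gfun (of_nat p * (of_real x + \<i> * of_real y))))) \<longlongrightarrow> \<kappa> * real v)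
              (at_right 0)"
  shows "\<kappa> > 0 \<Longrightarrow> max_attained_twice (\<lambda>(i, j). u * i + v * j) (bipoly_support N C)"
    and "\<kappa> < 0 \<Longrightarrow> min_attained_twice (\<lambda>(i, j). u * i + v * j) (bipoly_support N C)"
proof -
  have Im: "Im (of_real x + \<i> * of_real y) > 0" "Im (of_nat p * (of_real x + \<i> * of_real y)) > 0"
    if "y > 0" for y
    using that \<open>p > 0\<close> by simp_all
  have "max_attained_twice (\<lambda>(i, j). \<kappa> * real u * real i + \<kappa> * real v * real j) (bipoly_support N C)"
  proof (rule max_attained_twice_if_monomial_sum_eq_0[OF finite_bipoly_support _ _ _ X Y])
    show "of_rat (C i j) \<noteq> (0 :: complex)" if "(i, j) \<in> bipoly_support N C" for i j
      using that by (simp add: bipoly_support_def)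
    show "eventually (\<lambda>y. (\<Sum>(i, j)\<in>bipoly_support N C. of_rat (C i j)
            * gfun (of_real x + \<i> * of_real y) ^ i * gfun (of_nat p * (of_real x + \<i> * of_real y)) ^ j)
            = 0) (at_right 0)"
      using eventually_at_right_less[of 0]
      by eventually_elim (use rel Im in \<open>simp flip: eval_bipoly_eq_sum_support\<close>)
    show "eventually (\<lambda>y. gfun (of_real x + \<i> * of_real y) \<noteq> 0
            \<and> gfun (of_nat p * (of_real x + \<i> * of_real y)) \<noteq> 0) (at_right 0)"
      using eventually_at_right_less[of 0] by eventually_elim (use Im ln_norm_gfun(1) in blast)
  qed
  moreover have "(\<lambda>(i, j). \<kappa> * real u * real i + \<kappa> * real v * real j)
                 = (\<lambda>s. \<kappa> * real ((\<lambda>(i, j). u * i + v * j) s))"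
    by (simp add: fun_eq_iff algebra_simps split: prod.split)
  ultimately show "\<kappa> > 0 \<Longrightarrow> max_attained_twice (\<lambda>(i, j). u * i + v * j) (bipoly_support N C)"
    and "\<kappa> < 0 \<Longrightarrow> min_attained_twice (\<lambda>(i, j). u * i + v * j) (bipoly_support N C)"
    using max_attained_twice_scale by metis+
qed

lemma coprime_10D:
  fixes p :: nat
  assumes "coprime p 10"
  shows "coprime p 2" "coprime p 5"
  using assms coprime_mult_right_iff[of p 2 5] by simp_all

lemma max_attained_twice_cusp_0:
  fixes p :: nat
  assumes rel: "\<And>\<tau>. Im \<tau> > 0 \<Longrightarrow> eval_bipoly N C (gfun \<tau>) (gfun (of_nat p * \<tau>)) = 0"
    and "coprime p 10"
  shows "max_attained_twice (\<lambda>(i, j). p * i + j) (bipoly_support N C)"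
proof -
  have "p > 0" using assms(2) by (cases p) auto
  define \<kappa> where "\<kappa> = 6 * basel_sum / (5 * pi * p)"
  have "\<kappa> > 0" using \<open>p > 0\<close> basel_sum_pos by (simp add: \<kappa>_def)
  have X: "((\<lambda>y. y * ln (norm (gfun (of_real 0 + \<i> * of_real y)))) \<longlongrightarrow> \<kappa> * real p) (at_right 0)"
    using tendsto_ln_norm_gfun_vertical[where s=1 and x=0 and ja=0 and na=1 and jb=0 and nb=1
        and jc=0 and nc=1 and jd=0 and nd=1] \<open>p > 0\<close>
    by (simp add: \<kappa>_def field_simps)
  have Y: "((\<lambda>y. y * ln (norm (gfun (of_nat p * (of_real 0 + \<i> * of_real y))))) \<longlongrightarrow> \<kappa> * real 1)
             (at_right 0)"
    using tendsto_ln_norm_gfun_vertical[where s=p and x=0 and ja=0 and na=1 and jb=0 and nb=1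
        and jc=0 and nc=1 and jd=0 and nd=1] \<open>p > 0\<close>
    by (simp add: \<kappa>_def field_simps)
  from modular_relation_extremal_weight(1)[OF rel \<open>p > 0\<close> X Y \<open>\<kappa> > 0\<close>] show ?thesis by simp
qed

lemma max_attained_twice_cusp_inv_p:
  fixes p :: nat
  assumes rel: "\<And>\<tau>. Im \<tau> > 0 \<Longrightarrow> eval_bipoly N C (gfun \<tau>) (gfun (of_nat p * \<tau>)) = 0"
    and "coprime p 10"
  shows "max_attained_twice (\<lambda>(i, j). i + p * j) (bipoly_support N C)"
proof -
  have "p > 0" using assms(2) by (cases p) auto
  have cp: "coprime 1 p" "coprime 2 p" "coprime 5 p" "coprime 10 p"
    using coprime_10D[OF assms(2)] assms(2) by (simp_all add: coprime_commute)
  define \<kappa> where "\<kappa> = 6 * basel_sum / (5 * pi * p ^ 2)"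
  have "\<kappa> > 0" using \<open>p > 0\<close> basel_sum_pos by (simp add: \<kappa>_def)
  have X: "((\<lambda>y. y * ln (norm (gfun (of_real (1 / p) + \<i> * of_real y)))) \<longlongrightarrow> \<kappa> * real 1) (at_right 0)"
    using tendsto_ln_norm_gfun_vertical[where s=1 and x="1 / p" and ja=1 and na=p and jb=2 and nb=p
        and jc=5 and nc=p and jd=10 and nd=p] \<open>p > 0\<close> cp
    by (simp add: \<kappa>_def field_simps)
  have Y: "((\<lambda>y. y * ln (norm (gfun (of_nat p * (of_real (1 / p) + \<i> * of_real y)))))
                   \<longlongrightarrow> \<kappa> * real p) (at_right 0)"
    using tendsto_ln_norm_gfun_vertical[where s=p and x="1 / p" and ja=1 and na=1 and jb=2 and nb=1
        and jc=5 and nc=1 and jd=10 and nd=1] \<open>p > 0\<close>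
    by (simp add: \<kappa>_def field_simps power2_eq_square)
  from modular_relation_extremal_weight(1)[OF rel \<open>p > 0\<close> X Y \<open>\<kappa> > 0\<close>] show ?thesis by simp
qed

lemma min_attained_twice_cusp_inv_5:
  fixes p :: nat
  assumes rel: "\<And>\<tau>. Im \<tau> > 0 \<Longrightarrow> eval_bipoly N C (gfun \<tau>) (gfun (of_nat p * \<tau>)) = 0"
    and "coprime p 10"
  shows "min_attained_twice (\<lambda>(i, j). p * i + j) (bipoly_support N C)"
proof -
  have "p > 0" using assms(2) by (cases p) auto
  have cp: "coprime (1::nat) 5" "coprime (2::nat) 5" "coprime p 5" "coprime (2 * p) 5"
    using coprime_10D[OF assms(2)] by simp_all
  define \<kappa> where "\<kappa> = - 6 * basel_sum / (25 * pi * p)"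
  have "\<kappa> < 0" using \<open>p > 0\<close> basel_sum_pos by (simp add: \<kappa>_def divide_neg_pos)
  have X: "((\<lambda>y. y * ln (norm (gfun (of_real (1 / 5) + \<i> * of_real y)))) \<longlongrightarrow> \<kappa> * real p) (at_right 0)"
    using tendsto_ln_norm_gfun_vertical[where s=1 and x="1 / 5" and ja=1 and na=5 and jb=2 and nb=5
        and jc=1 and nc=1 and jd=2 and nd=1] \<open>p > 0\<close> cp
    by (simp add: \<kappa>_def field_simps)
  have Y: "((\<lambda>y. y * ln (norm (gfun (of_nat p * (of_real (1 / 5) + \<i> * of_real y)))))
                   \<longlongrightarrow> \<kappa> * real 1) (at_right 0)"
    using tendsto_ln_norm_gfun_vertical[where s=p and x="1 / 5" and ja=p and na=5 and jb="2 * p" and nb=5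
        and jc=p and nc=1 and jd="2 * p" and nd=1] \<open>p > 0\<close> cp
    by (simp add: \<kappa>_def field_simps)
  from modular_relation_extremal_weight(2)[OF rel \<open>p > 0\<close> X Y \<open>\<kappa> < 0\<close>] show ?thesis by simp
qed

lemma min_attained_twice_cusp_inv_5p:
  fixes p :: nat
  assumes rel: "\<And>\<tau>. Im \<tau> > 0 \<Longrightarrow> eval_bipoly N C (gfun \<tau>) (gfun (of_nat p * \<tau>)) = 0"
    and "coprime p 10"
  shows "min_attained_twice (\<lambda>(i, j). i + p * j) (bipoly_support N C)"
proof -
  have "p > 0" using assms(2) by (cases p) auto
  have cp: "coprime 1 (5 * p)" "coprime 2 (5 * p)" "coprime 1 p" "coprime 2 p"
    "coprime (1::nat) 5" "coprime (2::nat) 5"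
    using coprime_10D[OF assms(2)] assms(2) by (simp_all add: coprime_commute)
  define \<kappa> where "\<kappa> = - 6 * basel_sum / (25 * pi * p ^ 2)"
  have "\<kappa> < 0" using \<open>p > 0\<close> basel_sum_pos by (simp add: \<kappa>_def divide_neg_pos)
  have X: "((\<lambda>y. y * ln (norm (gfun (of_real (1 / (5 * p)) + \<i> * of_real y)))) \<longlongrightarrow> \<kappa> * real 1) (at_right 0)"
    using tendsto_ln_norm_gfun_vertical[where s=1 and x="1 / (5 * p)" and ja=1 and na="5 * p" and jb=2
        and nb="5 * p" and jc=1 and nc=p and jd=2 and nd=p] \<open>p > 0\<close> cp
    by (simp add: \<kappa>_def field_simps)
  have Y: "((\<lambda>y. y * ln (norm (gfun (of_nat p * (of_real (1 / (5 * p)) + \<i> * of_real y)))))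
                   \<longlongrightarrow> \<kappa> * real p) (at_right 0)"
    using tendsto_ln_norm_gfun_vertical[where s=p and x="1 / (5 * p)" and ja=1 and na=5 and jb=2 and nb=5
        and jc=1 and nc=1 and jd=2 and nd=1] \<open>p > 0\<close> cp
    by (simp add: \<kappa>_def field_simps power2_eq_square)
  from modular_relation_extremal_weight(2)[OF rel \<open>p > 0\<close> X Y \<open>\<kappa> < 0\<close>] show ?thesis by simp
qed

section \<open>Supports with doubly attained extremal weights\<close>

lemma mult_add_le_imp_le:
  fixes p X Y x y :: nat
  assumes "p * X + x \<le> p * Y + y" "y < p + x"
  shows "X \<le> Y"
proof (rule ccontr)
  assume "\<not> X \<le> Y"
  then have "p * (Y + 1) \<le> p * X" by (intro mult_le_mono2) simp
  moreover have "p * (Y + 1) = p * Y + p" by simp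
  ultimately show False using assms by linarith
qed

lemma equal_weights_adjacent:
  fixes p i j i' j' :: nat
  assumes p: "p \<ge> 2" and eq: "p * i + j = p * i' + j'" and ne: "(i, j) \<noteq> (i', j')"
    and "j \<le> p + 1" "j' \<le> p + 1"
  shows "(i = i' + 1 \<and> j' = j + p) \<or> (i' = i + 1 \<and> j = j' + p)"
proof -
  have step: "i1 = i2 + 1 \<and> j2 = j1 + p"
    if "i1 = i2 + k" "k > 0" "p * i1 + j1 = p * i2 + j2" "j2 \<le> p + 1" for i1 i2 k j1 j2
  proof -
    have "p * k + j1 = j2" using that by (simp add: algebra_simps)
    moreover have "k = 1"
    proof (rule ccontr)
      assume "k \<noteq> 1"
      then have "p * 2 \<le> p * k" using that(2) by (intro mult_le_mono2) simp
      with \<open>p * k + j1 = j2\<close> that(4) p show False by linarith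
    qed
    ultimately show ?thesis using that(1) by simp
  qed
  consider "i' < i" | "i < i'" | "i = i'" by linarith
  then show ?thesis
  proof cases
    case 1
    then obtain k where "i = i' + k" "k > 0" by (metis less_imp_add_positive add.commute)
    from step[OF this eq assms(5)] show ?thesis by simp
  next
    case 2
    then obtain k where "i' = i + k" "k > 0" by (metis less_imp_add_positive add.commute)
    from step[OF this eq[symmetric] assms(4)] show ?thesis by simp
  next
    case 3
    then show ?thesis using eq ne by simp
  qed
qed

lemma adjacent_pair_if_equal_weights:
  fixes p :: nat and S :: "(nat \<times> nat) set"
  assumes "p \<ge> 2" "\<And>i j. (i, j) \<in> S \<Longrightarrow> j \<le> p + 1"
    and "s \<in> S" "t \<in> S" "s \<noteq> t" "(\<lambda>(i, j). p * i + j) t = (\<lambda>(i, j). p * i + j) s"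
  obtains a b where "(a + 1, b) \<in> S" "(a, b + p) \<in> S" "(\<lambda>(i, j). p * i + j) s = p * (a + 1) + b"
proof -
  obtain i j i' j' where s: "s = (i, j)" and t: "t = (i', j')" by fastforce
  have "(i = i' + 1 \<and> j' = j + p) \<or> (i' = i + 1 \<and> j = j' + p)"
    using equal_weights_adjacent[of p i j i' j'] assms by (auto simp: s t)
  then show thesis
  proof
    assume "i = i' + 1 \<and> j' = j + p"
    then show thesis using assms(3,4) by (intro that[of i' j]) (auto simp: s t)
  next
    assume "i' = i + 1 \<and> j = j' + p"
    then show thesis using assms(3,4) by (intro that[of i j']) (auto simp: s t algebra_simps)
  qed
qed

lemma max_weight_adjacent_pair:
  fixes p :: nat and S :: "(nat \<times> nat) set"
  assumes "p \<ge> 2" "finite S" "S \<noteq> {}" "\<And>i j. (i, j) \<in> S \<Longrightarrow> j \<le> p + 1"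
    and "max_attained_twice (\<lambda>(i, j). p * i + j) S"
  obtains a b where "(a + 1, b) \<in> S" "(a, b + p) \<in> S"
    "\<And>i j. (i, j) \<in> S \<Longrightarrow> p * i + j \<le> p * (a + 1) + b"
proof -
  obtain s t where st: "s \<in> S" "t \<in> S" "s \<noteq> t" "(\<lambda>(i, j). p * i + j) t = (\<lambda>(i, j). p * i + j) s"
    and max: "\<And>u. u \<in> S \<Longrightarrow> (\<lambda>(i, j). p * i + j) u \<le> (\<lambda>(i, j). p * i + j) s"
    using max_attained_twiceD[OF assms(2,3,5)] by blast
  obtain a b where "(a + 1, b) \<in> S" "(a, b + p) \<in> S" "(\<lambda>(i, j). p * i + j) s = p * (a + 1) + b"
    using adjacent_pair_if_equal_weights[OF assms(1) _ st] assms(4) by blast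
  with max show thesis by (intro that[of a b]) fastforce+
qed

lemma min_weight_adjacent_pair:
  fixes p :: nat and S :: "(nat \<times> nat) set"
  assumes "p \<ge> 2" "finite S" "S \<noteq> {}" "\<And>i j. (i, j) \<in> S \<Longrightarrow> j \<le> p + 1"
    and "min_attained_twice (\<lambda>(i, j). p * i + j) S"
  obtains a b where "(a + 1, b) \<in> S" "(a, b + p) \<in> S"
    "\<And>i j. (i, j) \<in> S \<Longrightarrow> p * (a + 1) + b \<le> p * i + j"
proof -
  obtain s t where st: "s \<in> S" "t \<in> S" "s \<noteq> t" "(\<lambda>(i, j). p * i + j) t = (\<lambda>(i, j). p * i + j) s"
    and min: "\<And>u. u \<in> S \<Longrightarrow> (\<lambda>(i, j). p * i + j) s \<le> (\<lambda>(i, j). p * i + j) u"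
    using min_attained_twiceD[OF assms(2,3,5)] by blast
  obtain a b where "(a + 1, b) \<in> S" "(a, b + p) \<in> S" "(\<lambda>(i, j). p * i + j) s = p * (a + 1) + b"
    using adjacent_pair_if_equal_weights[OF assms(1) _ st] assms(4) by blast
  with min show thesis by (intro that[of a b]) fastforce+
qed

lemma corner_indices_of_max_pairs:
  fixes p a b c d :: nat
  assumes p: "p \<ge> 2" and b1: "b \<le> 1" and d1: "d \<le> 1" and a1: "a \<le> p" and c1: "c \<le> p"
    and E1: "p * (b + p) + a \<le> p * (c + 1) + d" and E2: "p * (d + p) + c \<le> p * (a + 1) + b"
  shows "a = p \<and> b = 0 \<and> c = p \<and> d = 0"
proof -
  have G1: "d + p \<le> a + 1" by (rule mult_add_le_imp_le[OF E2]) (use b1 p in linarith)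
  have G2: "b + p \<le> c + 1" by (rule mult_add_le_imp_le[OF E1]) (use d1 p in linarith)
  have d0: "d = 0"
  proof (rule ccontr)
    assume "d \<noteq> 0"
    then have "d = 1" "a = p" using d1 G1 a1 by simp_all
    then have "c \<le> b" using E2 by (simp add: algebra_simps)
    then show False using G2 b1 p by linarith
  qed
  have b0: "b = 0"
  proof (rule ccontr)
    assume "b \<noteq> 0"
    then have "b = 1" "c = p" using b1 G2 c1 by simp_all
    then show False using E1 G1 d0 p by (simp add: algebra_simps)
  qed
  have "a = p"
  proof (rule ccontr)
    assume "a \<noteq> p"
    then have "a + 1 = p" using G1 a1 d0 by simp
    then have "c = 0" using E2 d0 b0 by simp
    then show False using G2 p b0 by linarith
  qed
  moreover have "c = p"
  proof (rule ccontr)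
    assume "c \<noteq> p"
    then have "c + 1 = p" using G2 c1 b0 by simp
    then show False using E1 \<open>a = p\<close> b0 d0 p by (simp add: algebra_simps)
  qed
  ultimately show ?thesis using b0 d0 by simp
qed

lemma corner_indices_of_min_pairs:
  fixes p a b c d :: nat
  assumes p: "p \<ge> 2" and b1: "b \<le> 1" and d1: "d \<le> 1"
    and F1: "p * (a + 1) + b \<le> p * d + (c + 1)" and F2: "d + p * (c + 1) \<le> (a + 1) + p * b"
    and V1: "a + p * (b + p) \<le> p * (p + 1)" and V2: "p * (d + p) + c \<le> p * (p + 1)"
  shows "a = 0 \<and> b = 1 \<and> c = 0 \<and> d = 1"
proof -
  have b_one: "b = 1"
  proof (rule ccontr)
    assume "b \<noteq> 1"
    then have b0: "b = 0" using b1 by simp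
    show False
    proof (cases "d = 0")
      case True
      have "2 * (a + 1) \<le> p * (a + 1)" using p by (intro mult_le_mono1)
      also have "\<dots> \<le> c + 1" using F1 b0 True by simp
      also have "\<dots> \<le> p * (c + 1)" using mult_le_mono1[of 1 p "c + 1"] p by simp
      also have "\<dots> \<le> a + 1" using F2 b0 True by simp
      finally show False by simp
    next
      case False
      then have "d = 1" using d1 by simp
      then have "c = 0" using V2 by (simp add: algebra_simps)
      then have "p * a \<le> 1" using F1 b0 \<open>d = 1\<close> by (simp add: algebra_simps)
      then have "a = 0" using p by (cases a) auto
      then show False using F2 b0 \<open>d = 1\<close> \<open>c = 0\<close> p by simp
    qed
  qed
  have a0: "a = 0" using V1 b_one by (simp add: algebra_simps)
  have d_one: "d = 1"
  proof (rule ccontr)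
    assume "d \<noteq> 1"
    then have d0: "d = 0" using d1 by simp
    have "p + 1 \<le> c + 1" using F1 a0 b_one d0 by simp
    then have "p * (p + 1) \<le> p * (c + 1)" by (rule mult_le_mono2)
    moreover have "p * (c + 1) \<le> 1 + p" using F2 a0 b_one d0 by simp
    moreover have "2 * 2 \<le> p * p" using mult_le_mono[OF p p] by simp
    moreover have "p * (p + 1) = p * p + p" by (simp add: algebra_simps)
    ultimately show False by linarith
  qed
  have "c = 0" using V2 d_one by (simp add: algebra_simps)
  with a0 b_one d_one show ?thesis by simp
qed

lemma max_weights_attained_twice_imp_corners:
  fixes p :: nat and S :: "(nat \<times> nat) set"
  assumes p: "p \<ge> 2" and fin: "finite S" and ne: "S \<noteq> {}"
    and box: "\<And>i j. (i, j) \<in> S \<Longrightarrow> i \<le> p + 1 \<and> j \<le> p + 1"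
    and max1: "max_attained_twice (\<lambda>(i, j). p * i + j) S"
    and max2: "max_attained_twice (\<lambda>(i, j). i + p * j) S"
  shows "(p + 1, 0) \<in> S" "(0, p + 1) \<in> S"
    and "\<And>i j. (i, j) \<in> S \<Longrightarrow> p * i + j \<le> p * (p + 1) \<and> i + p * j \<le> p * (p + 1)"
proof -
  obtain a b where A1: "(a + 1, b) \<in> S" and A2: "(a, b + p) \<in> S"
    and M1: "\<And>i j. (i, j) \<in> S \<Longrightarrow> p * i + j \<le> p * (a + 1) + b"
    using max_weight_adjacent_pair[OF p fin ne _ max1] box by blast
  have "max_attained_twice (\<lambda>(i, j). p * i + j) (prod.swap ` S)"
    using max2 by (simp add: max_attained_twice_image weight_comp_swap)
  then obtain c d where "(c + 1, d) \<in> prod.swap ` S" "(c, d + p) \<in> prod.swap ` S"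
    and M2': "\<And>i j. (i, j) \<in> prod.swap ` S \<Longrightarrow> p * i + j \<le> p * (c + 1) + d"
    using max_weight_adjacent_pair[OF p, of "prod.swap ` S"] fin ne box by auto
  then have C1: "(d, c + 1) \<in> S" and C2: "(d + p, c) \<in> S" by auto
  have M2: "i + p * j \<le> d + p * (c + 1)" if "(i, j) \<in> S" for i j
    using M2'[of j i] that by (force simp: add.commute)
  have "a = p \<and> b = 0 \<and> c = p \<and> d = 0"
    using box[OF A1] box[OF A2] box[OF C1] box[OF C2] M2[OF A2] M1[OF C2] p
    by (intro corner_indices_of_max_pairs) (simp_all add: algebra_simps)
  then show "(p + 1, 0) \<in> S" "(0, p + 1) \<in> S" using A1 C1 by simp_all
  show "p * i + j \<le> p * (p + 1) \<and> i + p * j \<le> p * (p + 1)" if "(i, j) \<in> S" for i j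
    using \<open>a = p \<and> b = 0 \<and> c = p \<and> d = 0\<close> M1[OF that] M2[OF that] by (simp add: algebra_simps)
qed

lemma min_weights_attained_twice_imp_lower_bound:
  fixes p :: nat and S :: "(nat \<times> nat) set"
  assumes p: "p \<ge> 2" and fin: "finite S" and ne: "S \<noteq> {}"
    and box: "\<And>i j. (i, j) \<in> S \<Longrightarrow> i \<le> p + 1 \<and> j \<le> p + 1"
    and upper: "\<And>i j. (i, j) \<in> S \<Longrightarrow> p * i + j \<le> p * (p + 1) \<and> i + p * j \<le> p * (p + 1)"
    and min1: "min_attained_twice (\<lambda>(i, j). p * i + j) S"
    and min2: "min_attained_twice (\<lambda>(i, j). i + p * j) S"
  shows "\<And>i j. (i, j) \<in> S \<Longrightarrow> p + 1 \<le> p * i + j \<and> p + 1 \<le> i + p * j"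
proof -
  obtain a b where A1: "(a + 1, b) \<in> S" and A2: "(a, b + p) \<in> S"
    and N1: "\<And>i j. (i, j) \<in> S \<Longrightarrow> p * (a + 1) + b \<le> p * i + j"
    using min_weight_adjacent_pair[OF p fin ne _ min1] box by blast
  have "min_attained_twice (\<lambda>(i, j). p * i + j) (prod.swap ` S)"
    using min2 by (simp add: min_attained_twice_image weight_comp_swap)
  then obtain c d where "(c + 1, d) \<in> prod.swap ` S" "(c, d + p) \<in> prod.swap ` S"
    and N2': "\<And>i j. (i, j) \<in> prod.swap ` S \<Longrightarrow> p * (c + 1) + d \<le> p * i + j"
    using min_weight_adjacent_pair[OF p, of "prod.swap ` S"] fin ne box by auto
  then have C1: "(d, c + 1) \<in> S" and C2: "(d + p, c) \<in> S" by auto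
  have N2: "d + p * (c + 1) \<le> i + p * j" if "(i, j) \<in> S" for i j
    using N2'[of j i] that by (force simp: add.commute)
  have "a = 0 \<and> b = 1 \<and> c = 0 \<and> d = 1"
    using box[OF A2] box[OF C2] N1[OF C1] N2[OF A1] conjunct2[OF upper[OF A2]] conjunct1[OF upper[OF C2]] p
    by (intro corner_indices_of_min_pairs) (simp_all add: algebra_simps)
  then show "p + 1 \<le> p * i + j \<and> p + 1 \<le> i + p * j" if "(i, j) \<in> S" for i j
    using N1[OF that] N2[OF that] by simp
qed

lemma support_corners:
  fixes p :: nat and S :: "(nat \<times> nat) set"
  assumes p: "p \<ge> 2" and fin: "finite S" and ne: "S \<noteq> {}"
    and box: "\<And>i j. (i, j) \<in> S \<Longrightarrow> i \<le> p + 1 \<and> j \<le> p + 1"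
    and max1: "max_attained_twice (\<lambda>(i, j). p * i + j) S"
    and max2: "max_attained_twice (\<lambda>(i, j). i + p * j) S"
    and min1: "min_attained_twice (\<lambda>(i, j). p * i + j) S"
    and min2: "min_attained_twice (\<lambda>(i, j). i + p * j) S"
  shows "(p + 1, 0) \<in> S" "(0, p + 1) \<in> S"
    and "\<And>j. (p + 1, j) \<in> S \<Longrightarrow> j = 0" "\<And>j. (j, p + 1) \<in> S \<Longrightarrow> j = 0"
    and "\<And>j. (0, j) \<in> S \<Longrightarrow> j = p + 1" "\<And>j. (j, 0) \<in> S \<Longrightarrow> j = p + 1"
proof -
  note corners = max_weights_attained_twice_imp_corners[OF p fin ne box max1 max2]
  have upper: "p * i + j \<le> p * (p + 1) \<and> i + p * j \<le> p * (p + 1)" if "(i, j) \<in> S" for i j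
    using corners(3) that by blast
  have lower: "p + 1 \<le> p * i + j \<and> p + 1 \<le> i + p * j" if "(i, j) \<in> S" for i j
    using min_weights_attained_twice_imp_lower_bound[of p S] p fin ne box upper min1 min2 that
    by blast
  show "(p + 1, 0) \<in> S" "(0, p + 1) \<in> S" using corners(1,2) by blast+
  show "j = 0" if "(p + 1, j) \<in> S" for j using upper[OF that] by simp
  show "j = 0" if "(j, p + 1) \<in> S" for j using upper[OF that] by simp
  show "j = p + 1" if "(0, j) \<in> S" for j using lower[OF that] box[OF that] by simp
  show "j = p + 1" if "(j, 0) \<in> S" for j using lower[OF that] box[OF that] by simp
qed

lemma modular_relation_coefficients:
  fixes p :: nat and C :: "nat \<Rightarrow> nat \<Rightarrow> rat"
  assumes "p \<ge> 2" and "coprime p 10"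
    and "\<exists>i\<le>p + 1. \<exists>j\<le>p + 1. C i j \<noteq> 0"
    and rel: "\<And>\<tau>. Im \<tau> > 0 \<Longrightarrow> eval_bipoly (p + 1) C (gfun \<tau>) (gfun (of_nat p * \<tau>)) = 0"
  shows "(C (p + 1) 0 \<noteq> 0 \<and> C 0 (p + 1) \<noteq> 0) \<and>
         (\<forall>j\<in>{1..p + 1}. C (p + 1) j = 0 \<and> C j (p + 1) = 0) \<and>
         (\<forall>j\<in>{0..p}. C 0 j = 0 \<and> C j 0 = 0)"
proof -
  define S where "S = bipoly_support (p + 1) C"
  have mem: "(i, j) \<in> S \<longleftrightarrow> i \<le> p + 1 \<and> j \<le> p + 1 \<and> C i j \<noteq> 0" for i j
    by (simp add: S_def bipoly_support_def)
  have "finite S" by (simp add: S_def finite_bipoly_support)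
  have "S \<noteq> {}" using assms(3) mem by blast
  have box: "\<And>i j. (i, j) \<in> S \<Longrightarrow> i \<le> p + 1 \<and> j \<le> p + 1" by (simp add: mem)
  have max1: "max_attained_twice (\<lambda>(i, j). p * i + j) S"
    unfolding S_def by (rule max_attained_twice_cusp_0[OF _ \<open>coprime p 10\<close>]) (fact rel)
  have max2: "max_attained_twice (\<lambda>(i, j). i + p * j) S"
    unfolding S_def by (rule max_attained_twice_cusp_inv_p[OF _ \<open>coprime p 10\<close>]) (fact rel)
  have min1: "min_attained_twice (\<lambda>(i, j). p * i + j) S"
    unfolding S_def by (rule min_attained_twice_cusp_inv_5[OF _ \<open>coprime p 10\<close>]) (fact rel)
  have min2: "min_attained_twice (\<lambda>(i, j). i + p * j) S"
    unfolding S_def by (rule min_attained_twice_cusp_inv_5p[OF _ \<open>coprime p 10\<close>]) (fact rel)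
  have shape: "(p + 1, 0) \<in> S" "(0, p + 1) \<in> S"
    "\<And>j. (p + 1, j) \<in> S \<Longrightarrow> j = 0" "\<And>j. (j, p + 1) \<in> S \<Longrightarrow> j = 0"
    "\<And>j. (0, j) \<in> S \<Longrightarrow> j = p + 1" "\<And>j. (j, 0) \<in> S \<Longrightarrow> j = p + 1"
    using support_corners[of p S] \<open>p \<ge> 2\<close> \<open>finite S\<close> \<open>S \<noteq> {}\<close> box max1 max2 min1 min2
    by blast+
  show ?thesis
  proof (intro conjI ballI)
    show "C (p + 1) 0 \<noteq> 0" "C 0 (p + 1) \<noteq> 0" using shape(1,2) by (simp_all add: mem)
    show "C (p + 1) j = 0" "C j (p + 1) = 0" if "j \<in> {1..p + 1}" for j
      using shape(3,4)[of j] that by (auto simp: mem)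
    show "C 0 j = 0" "C j 0 = 0" if "j \<in> {0..p}" for j
      using shape(5,6)[of j] that by (auto simp: mem)
  qed
qed

lemma coprime_10_if_odd_prime:
  fixes p :: nat
  assumes "prime p" "odd p" "p \<noteq> 5"
  shows "coprime p 10"
proof -
  have "\<not> p dvd 5"
  proof
    assume "p dvd 5"
    then have "p \<le> 5" by (auto dest: dvd_imp_le)
    with prime_ge_2_nat[OF \<open>prime p\<close>] assms(2,3) have "p = 3" by presburger
    with \<open>p dvd 5\<close> show False by simp
  qed
  then show ?thesis
    using assms(1,2) coprime_mult_right_iff[of p 2 5] by (simp add: prime_imp_coprime)
qed

theorem theorem4p7:
  fixes p :: nat and C :: "nat \<Rightarrow> nat \<Rightarrow> rat"
  assumes "prime p" and "odd p" and "p \<noteq> 5"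
    and "\<exists>i\<le>p+1. \<exists>j\<le>p+1. C i j \<noteq> 0"
    and "\<And>\<tau>. Im \<tau> > 0 \<Longrightarrow>
            eval_bipoly (p+1) C (gfun \<tau>) (gfun (of_nat p * \<tau>)) = 0"
  shows "(C (p+1) 0 \<noteq> 0 \<and> C 0 (p+1) \<noteq> 0) \<and>
         (\<forall>j\<in>{1..p+1}. C (p+1) j = 0 \<and> C j (p+1) = 0) \<and>
         (\<forall>j\<in>{0..p}. C 0 j = 0 \<and> C j 0 = 0)"
proof (rule modular_relation_coefficients)
  show "p \<ge> 2" using \<open>prime p\<close> by (rule prime_ge_2_nat)
  show "coprime p 10" using assms(1-3) by (rule coprime_10_if_odd_prime)
qed (fact assms(4), fact assms(5))

end
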